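(* Let $\mathbb{F}_2=\langle a\rangle\ast\langle b\rangle$ and let $f=f_A\ast f_B$ be a split quasimorphism with bounded factors $f_A,f_B$. Then $f$ is at bounded distance from the (pointwise convergent) sum \[ \sum_{k=1}^\infty f_A(a^k)C_{a,k}+f_B(b^k)C_{b,k}, \] which is a quasimorphism; in particular $\widehat f=\sum_{k=1}^\infty f_A(a^k)\widehat{C}_{a,k}+f_B(b^k)\widehat{C}_{b,k}$. Furthermore, if $f_A$ and $f_B$ have finite support, then $f$ is at bounded distance from a finite linear combination of counting quasimorphisms.
   Context: $f_A:\langle a\rangle\to\mathbb{R}$, $f_B:\langle b\rangle\to\mathbb{R}$ are bounded and alternating ($f(x^{-1})=-f(x)$); each non-trivial element of $\mathbb{F}_2$ has a unique normal form $a^{k_1}b^{l_1}\cdots a^{k_m}b^{l_m}$ with all exponents non-zero except possibly $k_1$ or $l_m$, and $f(1)=0$, $f(a^{k_1}b^{l_1}\cdots)=f_A(a^{k_1})+f_B(b^{l_1})+\dots+f_A(a^{k_m})+f_B(b^{l_m})$. For $w,g\in\mathbb{F}_2$, $h_w(g)$ is the number of occurrences (overlaps allowed) of the reduced word $w$ as a subword of the reduced word $g$ over $a^{\pm1},b^{\pm1}$ ($h_w(g)=0$ if $w$ or $g$ is trivial), and the counting quasimorphism is $C_w=h_w-h_{w^{-1}}$. For $k\geq1$: $C_{a,k}=C_{ba^kb}+C_{ba^kb^{-1}}+C_{b^{-1}a^kb}+C_{b^{-1}a^kb^{-1}}$ and $C_{b,k}=C_{ab^ka}+C_{ab^ka^{-1}}+C_{a^{-1}b^ka}+C_{a^{-1}b^ka^{-1}}$.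 Hats denote homogenization $\widehat F(g)=\lim_{n\to\infty}F(g^n)/n$. *)

theory Defs
  imports Complex_Main
begin

datatype gen = GA | GB

text \<open>A letter is a generator together with a flag: True means the inverse letter.\<close>
type_synonym letter = "gen \<times> bool"

definition inv_letter :: "letter \<Rightarrow> letter" where
  "inv_letter l = (fst l, \<not> snd l)"

definition reduced :: "letter list \<Rightarrow> bool" where
  "reduced xs = successively (\<lambda>x y. y \<noteq> inv_letter x) xs"

fun red_cons :: "letter \<Rightarrow> letter list \<Rightarrow> letter list" where
  "red_cons x [] = [x]"
| "red_cons x (y # ys) = (if y = inv_letter x then ys else x # y # ys)"

definition reduce :: "letter list \<Rightarrow> letter list" where
  "reduce xs = foldr red_cons xs []"

definition fmult :: "letter list \<Rightarrow> letter list \<Rightarrow> letter list" where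
  "fmult g h = reduce (g @ h)"

definition fpow :: "letter list \<Rightarrow> nat \<Rightarrow> letter list" where
  "fpow g n = (fmult g ^^ n) []"

definition finv :: "letter list \<Rightarrow> letter list" where
  "finv w = rev (map inv_letter w)"

definition apow :: "nat \<Rightarrow> letter list" where
  "apow k = replicate k (GA, False)"
definition bpow :: "nat \<Rightarrow> letter list" where
  "bpow k = replicate k (GB, False)"

abbreviation la :: "letter list" where "la \<equiv> [(GA, False)]"
abbreviation laI :: "letter list" where "laI \<equiv> [(GA, True)]"
abbreviation lb :: "letter list" where "lb \<equiv> [(GB, False)]"
abbreviation lbI :: "letter list" where "lbI \<equiv> [(GB, True)]"

definition lsgn :: "letter \<Rightarrow> int" where
  "lsgn l = (if snd l then -1 else 1)"

text \<open>Syllable decomposition: maximal runs of the same generator, with total exponent.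
  For a reduced word this is the normal form a^k1 b^l1 ... a^km b^lm (nonzero exponents).\<close>
fun syl :: "letter list \<Rightarrow> (gen \<times> int) list" where
  "syl [] = []"
| "syl (l # ls) = (case syl ls of
      [] \<Rightarrow> [(fst l, lsgn l)]
    | (x, k) # rest \<Rightarrow> (if x = fst l then (x, k + lsgn l) # rest
                       else (fst l, lsgn l) # (x, k) # rest))"

text \<open>fA k stands for f_A(a^k), fB k for f_B(b^k).\<close>
definition split_qm :: "(int \<Rightarrow> real) \<Rightarrow> (int \<Rightarrow> real) \<Rightarrow> letter list \<Rightarrow> real" where
  "split_qm fA fB g = sum_list (map (\<lambda>(x, k). if x = GA then fA k else fB k) (syl g))"

definition hcount :: "letter list \<Rightarrow> letter list \<Rightarrow> nat" where
  "hcount w g = (if w = [] \<or> g = [] then 0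
     else card {i. i + length w \<le> length g \<and> take (length w) (drop i g) = w})"

definition Ccount :: "letter list \<Rightarrow> letter list \<Rightarrow> real" where
  "Ccount w g = real (hcount w g) - real (hcount (finv w) g)"

definition Cak :: "nat \<Rightarrow> letter list \<Rightarrow> real" where
  "Cak k g = Ccount (lb @ apow k @ lb) g + Ccount (lb @ apow k @ lbI) g
           + Ccount (lbI @ apow k @ lb) g + Ccount (lbI @ apow k @ lbI) g"

definition Cbk :: "nat \<Rightarrow> letter list \<Rightarrow> real" where
  "Cbk k g = Ccount (la @ bpow k @ la) g + Ccount (la @ bpow k @ laI) g
           + Ccount (laI @ bpow k @ la) g + Ccount (laI @ bpow k @ laI) g"

definition quasimorphism :: "(letter list \<Rightarrow> real) \<Rightarrow> bool" where
  "quasimorphism F \<longleftrightarrow> (\<exists>D. \<forall>g h. reduced g \<longrightarrow> reduced h \<longrightarrow>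
      \<bar>F (fmult g h) - F g - F h\<bar> \<le> D)"

definition homog :: "(letter list \<Rightarrow> real) \<Rightarrow> letter list \<Rightarrow> real" where
  "homog F g = lim (\<lambda>n. F (fpow g n) / real n)"

text \<open>The k-th term (k \<ge> 1) of the series.\<close>
definition sterm :: "(int \<Rightarrow> real) \<Rightarrow> (int \<Rightarrow> real) \<Rightarrow> nat \<Rightarrow> letter list \<Rightarrow> real" where
  "sterm fA fB k g = fA (int k) * Cak k g + fB (int k) * Cbk k g"

definition hterm :: "(int \<Rightarrow> real) \<Rightarrow> (int \<Rightarrow> real) \<Rightarrow> nat \<Rightarrow> letter list \<Rightarrow> real" where
  "hterm fA fB k g = fA (int k) * homog (Cak k) g + fB (int k) * homog (Cbk k) g"

end

theory Submission
  imports Defs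
begin

text \<open>
  In a reduced word an occurrence of \<open>b\<^sup>\<plusminus>\<^sup>1 a\<^sup>k b\<^sup>\<plusminus>\<^sup>1\<close> is exactly an inner syllable \<open>a\<^sup>k\<close> of the
  normal form, so \<open>C\<^sub>a\<^sub>,\<^sub>k\<close> counts inner syllables \<open>a\<^sup>k\<close> minus inner syllables \<open>a\<^sup>-\<^sup>k\<close>.
  For alternating \<open>f\<^sub>A, f\<^sub>B\<close> the series therefore evaluates to the sum of \<open>f\<close> over the inner
  syllables of \<open>g\<close>; it differs from the split quasimorphism \<open>f\<close> only by the first and the last
  syllable, i.e.\ by at most \<open>2 sup |f|\<close>.

  For the homogenizations note that \<open>C\<^sub>a\<^sub>,\<^sub>k\<close> is itself such a series (with \<open>f\<^sub>A\<close> the signed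
  indicator of \<open>\<plusminus>k\<close>), hence a quasimorphism whose homogenization exists. Since a counted run
  of length \<open>k\<close> uses \<open>k\<close> letters, the terms beyond \<open>K\<close> of the series at \<open>g\<^sup>n\<close> sum to
  \<open>O(n |g| / K)\<close>, which allows exchanging the limit \<open>n \<rightarrow> \<infinity>\<close> with the summation.
\<close>

lemma inv_letter_inv_letter [simp]: "inv_letter (inv_letter x) = x"
  by (simp add: inv_letter_def)

lemma inv_letter_neq [simp]: "x \<noteq> inv_letter x"
  by (auto simp: inv_letter_def prod_eq_iff)

lemma fst_inv_letter [simp]: "fst (inv_letter x) = fst x"
  by (simp add: inv_letter_def)

lemma lsgn_inv_letter [simp]: "lsgn (inv_letter l) = - lsgn l"
  by (simp add: lsgn_def inv_letter_def)

lemma reduced_Nil [simp]: "reduced []"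
  and reduced_singleton [simp]: "reduced [x]"
  by (auto simp: reduced_def)

lemma reduced_Cons_Cons [simp]:
  "reduced (x # y # ys) \<longleftrightarrow> y \<noteq> inv_letter x \<and> reduced (y # ys)"
  by (simp add: reduced_def)

lemma reduced_ConsD: "reduced (x # ys) \<Longrightarrow> reduced ys"
  by (cases ys) auto

lemma reduced_red_cons: "reduced ys \<Longrightarrow> reduced (red_cons x ys)"
  by (cases ys) (auto dest: reduced_ConsD)

lemma reduced_foldr_red_cons: "reduced z \<Longrightarrow> reduced (foldr red_cons xs z)"
  by (induction xs) (auto intro: reduced_red_cons)

lemma reduced_reduce: "reduced (reduce xs)"
  unfolding reduce_def by (rule reduced_foldr_red_cons) simp

lemma reduce_reduced: "reduced xs \<Longrightarrow> reduce xs = xs"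
proof (induction xs)
  case (Cons x xs)
  then have "reduce xs = xs"
    using reduced_ConsD by blast
  then show ?case
    using Cons.prems by (cases xs) (auto simp: reduce_def)
qed (simp add: reduce_def)

lemma red_cons_inv_letter_cancel: "reduced t \<Longrightarrow> red_cons x (red_cons (inv_letter x) t) = t"
  by (cases t rule: remdups_adj.cases) auto

lemma foldr_red_cons_red_cons:
  assumes "reduced z"
  shows "foldr red_cons (red_cons x w) z = red_cons x (foldr red_cons w z)"
proof (cases w)
  case (Cons y w')
  show ?thesis
  proof (cases "y = inv_letter x")
    case True
    then show ?thesis
      using Cons red_cons_inv_letter_cancel[OF reduced_foldr_red_cons[OF assms, of w'], of x]
      by simp
  qed (use Cons in simp)
qed simp

lemma foldr_red_cons_reduce:
  "reduced z \<Longrightarrow> foldr red_cons (reduce xs) z = foldr red_cons xs z"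
  unfolding reduce_def by (induction xs) (auto simp: foldr_red_cons_red_cons)

lemma reduce_append_reduce_left: "reduce (reduce xs @ ys) = reduce (xs @ ys)"
  unfolding reduce_def by (simp add: foldr_red_cons_reduce[unfolded reduce_def] reduced_foldr_red_cons)

lemma reduce_append_reduce_right: "reduce (xs @ reduce ys) = reduce (xs @ ys)"
proof -
  have "foldr red_cons (reduce ys) [] = reduce ys"
    using reduce_reduced[OF reduced_reduce] by (simp add: reduce_def)
  then show ?thesis
    by (simp add: reduce_def)
qed

lemma fmult_assoc: "fmult (fmult g h) k = fmult g (fmult h k)"
  unfolding fmult_def by (metis append_assoc reduce_append_reduce_left reduce_append_reduce_right)

lemma reduced_fmult: "reduced (fmult g h)"
  by (simp add: fmult_def reduced_reduce)

lemma fpow_0: "fpow g 0 = []"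
  and fpow_Suc: "fpow g (Suc n) = fmult g (fpow g n)"
  by (simp_all add: fpow_def)

lemma reduced_fpow: "reduced (fpow g n)"
  by (cases n) (simp_all add: fpow_0 fpow_Suc reduced_fmult)

lemma fpow_add: "fpow g (m + n) = fmult (fpow g m) (fpow g n)"
proof (induction m)
  case 0
  then show ?case
    by (simp add: fpow_0 fmult_def reduce_reduced reduced_fpow)
qed (simp add: fpow_Suc fmult_assoc)

lemma length_reduce: "length (reduce xs) \<le> length xs"
proof -
  have "length (red_cons x ys) \<le> Suc (length ys)" for x ys
    by (cases ys) auto
  then show ?thesis
    unfolding reduce_def by (induction xs) (auto intro: order_trans)
qed

lemma length_fpow: "length (fpow g n) \<le> n * length g"
proof (induction n)
  case (Suc n)
  have "length (fpow g (Suc n)) \<le> length g + length (fpow g n)"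
    using length_reduce[of "g @ fpow g n"] by (simp add: fpow_Suc fmult_def)
  with Suc show ?case
    by simp
qed (simp add: fpow_0)

lemma finv_Cons: "finv (x # xs) = finv xs @ [inv_letter x]"
  by (simp add: finv_def)

lemma finv_eq_Nil_iff [simp]: "finv w = [] \<longleftrightarrow> w = []"
  by (simp add: finv_def)

lemma foldr_red_cons_cancellation:
  assumes "reduced g" "reduced h"
  shows "\<exists>u x v. g = u @ x \<and> h = finv x @ v \<and> foldr red_cons g h = u @ v \<and> reduced (u @ v)"
  using assms(1)
proof (induction g)
  case Nil
  then show ?case
    using assms(2) by (intro exI[of _ "[]"] exI[of _ "[]"] exI[of _ h]) (auto simp: finv_def)
next
  case (Cons l g)
  obtain u x v where uxv: "g = u @ x" "h = finv x @ v" "foldr red_cons g h = u @ v" "reduced (u @ v)"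
    using Cons reduced_ConsD by blast
  show ?case
  proof (cases u)
    case (Cons u1 us)
    then have "u1 \<noteq> inv_letter l"
      using Cons.prems uxv(1) by auto
    then show ?thesis
      using uxv Cons by (intro exI[of _ "l # u"] exI[of _ x] exI[of _ v]) auto
  next
    case Nil
    show ?thesis
    proof (cases "\<exists>v'. v = inv_letter l # v'")
      case True
      then obtain v' where "v = inv_letter l # v'"
        by blast
      then show ?thesis
        using uxv Nil
        by (intro exI[of _ "[]"] exI[of _ "l # x"] exI[of _ v']) (auto simp: finv_Cons dest: reduced_ConsD)
    next
      case False
      then have "red_cons l v = l # v" "reduced (l # v)"
        using uxv(4) Nil by (cases v; auto)+
      then show ?thesis
        using uxv Nil by (intro exI[of _ "[l]"] exI[of _ x] exI[of _ v]) auto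
    qed
  qed
qed

lemma fmult_cancellation:
  assumes "reduced g" "reduced h"
  obtains u x v where "g = u @ x" "h = finv x @ v" "fmult g h = u @ v"
proof -
  have "fmult g h = foldr red_cons g h"
    using reduce_reduced[OF assms(2)] by (simp add: fmult_def reduce_def)
  then show ?thesis
    using foldr_red_cons_cancellation[OF assms] that by metis
qed


fun cons_syllable :: "gen \<times> int \<Rightarrow> (gen \<times> int) list \<Rightarrow> (gen \<times> int) list" where
  "cons_syllable a [] = [a]"
| "cons_syllable a ((x, k) # r) = (if x = fst a then (x, k + snd a) # r else a # (x, k) # r)"

lemma syl_Cons: "syl (l # ls) = cons_syllable (fst l, lsgn l) (syl ls)"
  by (cases "syl ls") auto

declare syl.simps(2) [simp del]

lemma syl_eq_Nil_iff [simp]: "syl p = [] \<longleftrightarrow> p = []"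
  by (cases p; cases "syl (tl p)") (auto simp: syl_Cons split: if_splits)

lemma fst_hd_syl: "p \<noteq> [] \<Longrightarrow> fst (hd (syl p)) = fst (hd p)"
  by (cases p; cases "syl (tl p)") (auto simp: syl_Cons)

definition join_syllables :: "(gen \<times> int) list \<Rightarrow> (gen \<times> int) list \<Rightarrow> (gen \<times> int) list" where
  "join_syllables s t = (if s \<noteq> [] \<and> t \<noteq> [] \<and> fst (last s) = fst (hd t)
     then butlast s @ (fst (hd t), snd (last s) + snd (hd t)) # tl t else s @ t)"

lemma join_syllables_Nil [simp]: "join_syllables [] t = t"
  by (simp add: join_syllables_def)

lemma cons_syllable_join_syllables:
  "cons_syllable a (join_syllables s t) = join_syllables (cons_syllable a s) t"
proof (cases s)
  case Nil
  then show ?thesis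
    by (cases t) (auto simp: join_syllables_def)
next
  case (Cons x r)
  then show ?thesis
    by (cases r; cases t; cases x; cases a) (auto simp: join_syllables_def algebra_simps)
qed

lemma syl_append: "syl (p @ q) = join_syllables (syl p) (syl q)"
  by (induction p) (simp_all add: syl_Cons cons_syllable_join_syllables)

definition neg_syllable :: "gen \<times> int \<Rightarrow> gen \<times> int" where
  "neg_syllable a = (fst a, - snd a)"

lemma syl_finv: "syl (finv p) = rev (map neg_syllable (syl p))"
proof (induction p)
  case (Cons l p)
  have "syl (finv (l # p)) = join_syllables (rev (map neg_syllable (syl p))) [(fst l, - lsgn l)]"
    by (simp add: finv_Cons syl_append Cons.IH syl_Cons)
  also have "\<dots> = rev (map neg_syllable (syl (l # p)))"
    by (cases "syl p" rule: list.exhaust; cases "hd (syl p)")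
      (auto simp: join_syllables_def syl_Cons neg_syllable_def last_rev butlast_rev)
  finally show ?case .
qed (simp add: finv_def)

definition syllable_value :: "(int \<Rightarrow> real) \<Rightarrow> (int \<Rightarrow> real) \<Rightarrow> gen \<times> int \<Rightarrow> real" where
  "syllable_value fA fB a = (if fst a = GA then fA (snd a) else fB (snd a))"

lemma split_qm_eq_sum_syllable_value:
  "split_qm fA fB g = sum_list (map (syllable_value fA fB) (syl g))"
  unfolding split_qm_def syllable_value_def by (simp add: case_prod_beta')

locale quasimorphic_factors =
  fixes fA fB :: "int \<Rightarrow> real" and D :: real
  assumes alternating_A: "\<And>k. fA (- k) = - fA k"
    and alternating_B: "\<And>k. fB (- k) = - fB k"
    and defect_A: "\<And>m n. \<bar>fA (m + n) - fA m - fA n\<bar> \<le> D"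
    and defect_B: "\<And>m n. \<bar>fB (m + n) - fB m - fB n\<bar> \<le> D"
begin

lemma defect_nonneg: "0 \<le> D"
  using defect_A[of 0 0] by simp

lemma split_qm_finv: "split_qm fA fB (finv p) = - split_qm fA fB p"
proof -
  have "syllable_value fA fB (neg_syllable a) = - syllable_value fA fB a" for a
    by (simp add: syllable_value_def neg_syllable_def alternating_A alternating_B)
  then show ?thesis
    by (simp add: split_qm_eq_sum_syllable_value syl_finv rev_map[symmetric] sum_list_rev
        comp_def uminus_sum_list_map)
qed

text \<open>Concatenation changes the syllable decomposition only where the two words meet.\<close>

lemma split_qm_append:
  "\<bar>split_qm fA fB (p @ q) - split_qm fA fB p - split_qm fA fB q\<bar> \<le> D"
proof (cases "syl p \<noteq> [] \<and> syl q \<noteq> [] \<and> fst (last (syl p)) = fst (hd (syl q))")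
  case True
  obtain s a where s: "syl p = s @ [a]"
    using True by (metis rev_exhaust)
  obtain b t where t: "syl q = b # t"
    using True by (metis list.exhaust)
  have "fst a = fst b"
    using True s t by simp
  moreover have "split_qm fA fB (p @ q) - split_qm fA fB p - split_qm fA fB q
      = syllable_value fA fB (fst b, snd a + snd b) - syllable_value fA fB a - syllable_value fA fB b"
    using True s t by (simp add: split_qm_eq_sum_syllable_value syl_append join_syllables_def)
  ultimately show ?thesis
    using defect_A defect_B by (auto simp: syllable_value_def)
next
  case False
  then have "join_syllables (syl p) (syl q) = syl p @ syl q"
    unfolding join_syllables_def by argo
  then show ?thesis
    using defect_nonneg by (simp add: split_qm_eq_sum_syllable_value syl_append)
qed

lemma split_qm_fmult_defect:
  assumes "reduced g" "reduced h"
  shows "\<bar>split_qm fA fB (fmult g h) - split_qm fA fB g - split_qm fA fB h\<bar> \<le> 3 * D"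
proof -
  obtain u x v where "g = u @ x" "h = finv x @ v" "fmult g h = u @ v"
    using fmult_cancellation[OF assms] .
  then show ?thesis
    using split_qm_append[of u x] split_qm_append[of "finv x" v] split_qm_append[of u v]
      split_qm_finv[of x]
    by simp
qed

end


lemma hcount_Cons:
  assumes "w \<noteq> []"
  shows "hcount w (z # g) = hcount w g + of_bool (\<exists>r. z # g = w @ r)"
proof -
  define occ where "occ h = {i. i + length w \<le> length h \<and> take (length w) (drop i h) = w}" for h
  have finite_occ: "finite (occ h)" for h
    by (rule finite_subset[of _ "{..length h}"]) (auto simp: occ_def)
  have head: "0 \<in> occ (z # g) \<longleftrightarrow> (\<exists>r. z # g = w @ r)"
  proof
    assume "0 \<in> occ (z # g)"
    then have "take (length w) (z # g) = w"
      by (simp add: occ_def)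
    then show "\<exists>r. z # g = w @ r"
      by (metis append_take_drop_id)
  next
    assume "\<exists>r. z # g = w @ r"
    then obtain r where "z # g = w @ r"
      by blast
    then show "0 \<in> occ (z # g)"
      by (simp add: occ_def)
  qed
  have shift: "Suc i \<in> occ (z # g) \<longleftrightarrow> i \<in> occ g" for i
    by (simp add: occ_def)
  have "occ (z # g) = (if \<exists>r. z # g = w @ r then {0} else {}) \<union> Suc ` occ g"
  proof (rule set_eqI)
    show "i \<in> occ (z # g) \<longleftrightarrow> i \<in> (if \<exists>r. z # g = w @ r then {0} else {}) \<union> Suc ` occ g" for i
      using head shift by (cases i) auto
  qed
  then have "card (occ (z # g)) = card (occ g) + of_bool (\<exists>r. z # g = w @ r)"
    by (simp add: card_image finite_occ)
  moreover have "hcount w h = card (occ h)" for h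
    using assms by (cases h) (auto simp: hcount_def occ_def)
  ultimately show ?thesis
    by simp
qed

lemma Ccount_Cons:
  assumes "w \<noteq> []"
  shows "Ccount w (z # g) = Ccount w g + of_bool (\<exists>r. z # g = w @ r) - of_bool (\<exists>r. z # g = finv w @ r)"
  using assms by (simp add: Ccount_def hcount_Cons)

lemma Ccount_short: "length g < length w \<Longrightarrow> Ccount w g = 0"
  by (simp add: Ccount_def hcount_def finv_def)

definition Crun :: "gen \<Rightarrow> gen \<Rightarrow> nat \<Rightarrow> letter list \<Rightarrow> real" where
  "Crun H G k g = Ccount ((H, False) # replicate k (G, False) @ [(H, False)]) g
     + Ccount ((H, False) # replicate k (G, False) @ [(H, True)]) g
     + Ccount ((H, True) # replicate k (G, False) @ [(H, False)]) g
     + Ccount ((H, True) # replicate k (G, False) @ [(H, True)]) g"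

lemma Cak_eq_Crun: "Cak k = Crun GB GA k"
  by (rule ext) (simp add: Cak_def Crun_def apow_def)

lemma Cbk_eq_Crun: "Cbk k = Crun GA GB k"
  by (rule ext) (simp add: Cbk_def Crun_def bpow_def)

lemma Crun_short: "length g < k + 2 \<Longrightarrow> Crun H G k g = 0"
  by (simp add: Crun_def Ccount_short)

lemma Crun_Nil [simp]: "Crun H G k [] = 0"
  by (simp add: Crun_short)

definition leading_run :: "letter \<Rightarrow> nat \<Rightarrow> letter list \<Rightarrow> bool" where
  "leading_run l k g \<longleftrightarrow> (\<exists>y r. g = replicate k l @ y # r \<and> fst y \<noteq> fst l)"

lemma Ccount_run_Cons:
  "Ccount (x # replicate k l @ [y]) (z # g) = Ccount (x # replicate k l @ [y]) g
     + of_bool (z = x \<and> (\<exists>r. g = replicate k l @ y # r))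
     - of_bool (z = inv_letter y \<and> (\<exists>r. g = replicate k (inv_letter l) @ inv_letter x # r))"
  by (subst Ccount_Cons) (auto simp: finv_def)

lemma Crun_Cons:
  assumes "H \<noteq> G"
  shows "Crun H G k (z # g) = Crun H G k g + of_bool (fst z = H \<and> leading_run (G, False) k g)
                                           - of_bool (fst z = H \<and> leading_run (G, True) k g)"
proof -
  define P where "P l y \<longleftrightarrow> (\<exists>r. g = replicate k l @ y # r)" for l y
  have not_both: "\<not> (P l (H, False) \<and> P l (H, True))" for l
    unfolding P_def by auto
  have letter_of_H: "fst y \<noteq> G \<longleftrightarrow> y = (H, False) \<or> y = (H, True)" for y :: letter
    using assms by (cases y; cases "fst y"; cases H; cases G) auto
  have run_iff: "leading_run (G, b) k g \<longleftrightarrow> P (G, b) (H, False) \<or> P (G, b) (H, True)" for b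
    unfolding leading_run_def P_def by (auto simp: letter_of_H)
  have fst_z: "fst z = H \<longleftrightarrow> z = (H, False) \<or> z = (H, True)"
    by (cases z; cases "snd z") auto
  have inv: "inv_letter (H, False) = (H, True)" "inv_letter (H, True) = (H, False)"
    "inv_letter (G, False) = (G, True)"
    by (simp_all add: inv_letter_def)
  have "Crun H G k (z # g) = Crun H G k g
     + (of_bool (z = (H, False) \<and> P (G, False) (H, False)) + of_bool (z = (H, False) \<and> P (G, False) (H, True))
      + of_bool (z = (H, True) \<and> P (G, False) (H, False)) + of_bool (z = (H, True) \<and> P (G, False) (H, True)))
     - (of_bool (z = (H, True) \<and> P (G, True) (H, True)) + of_bool (z = (H, False) \<and> P (G, True) (H, True))
      + of_bool (z = (H, True) \<and> P (G, True) (H, False)) + of_bool (z = (H, False) \<and> P (G, True) (H, False)))"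
    unfolding Crun_def Ccount_run_Cons inv P_def by linarith
  also have "\<dots> = Crun H G k g + of_bool (fst z = H \<and> leading_run (G, False) k g)
                               - of_bool (fst z = H \<and> leading_run (G, True) k g)"
    using not_both[of "(G, False)"] not_both[of "(G, True)"] unfolding run_iff fst_z
    by (cases "P (G, False) (H, False)"; cases "P (G, False) (H, True)"; cases "P (G, True) (H, False)";
        cases "P (G, True) (H, True)"; cases "z = (H, False)"; cases "z = (H, True)") simp_all
  finally show ?thesis .
qed


lemma syl_replicate_append:
  assumes "rest = [] \<or> fst (hd rest) \<noteq> fst l"
  shows "syl (replicate (Suc k) l @ rest) = (fst l, int (Suc k) * lsgn l) # syl rest"
proof (induction k)
  case 0
  show ?case
  proof (cases "syl rest")
    case (Cons a t)
    then have "fst a \<noteq> fst l"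
      using assms fst_hd_syl[of rest] by (cases rest) auto
    with Cons show ?thesis
      by (cases a) (simp add: syl_Cons)
  qed (simp add: syl_Cons)
qed (simp add: syl_Cons algebra_simps)

lemma leading_run_syl:
  assumes "leading_run l k g" "1 \<le> k"
  shows "\<exists>a t. syl g = (fst l, int k * lsgn l) # a # t"
proof -
  obtain y r where g: "g = replicate k l @ y # r" "fst y \<noteq> fst l"
    using assms(1) leading_run_def by blast
  obtain k' where "k = Suc k'"
    using assms(2) by (cases k) auto
  with g have "syl g = (fst l, int k * lsgn l) # syl (y # r)"
    using syl_replicate_append[of "y # r" l k'] by simp
  then show ?thesis
    by (cases "syl (y # r)") auto
qed

lemma exists_leading_run:
  assumes "reduced g" "2 \<le> length (syl g)"
  obtains l k where "1 \<le> k" "leading_run l k g"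
proof -
  obtain l g' where g: "g = l # g'"
    using assms(2) by (cases g) auto
  define k where "k = length (takeWhile (\<lambda>x. x = l) g)"
  define rest where "rest = dropWhile (\<lambda>x. x = l) g"
  have "takeWhile (\<lambda>x. x = l) g = replicate k l"
    unfolding k_def by (induction g) auto
  then have g_split: "g = replicate k l @ rest"
    unfolding rest_def by (metis takeWhile_dropWhile_id)
  obtain k' where k: "k = Suc k'"
    unfolding k_def g by simp
  show ?thesis
  proof (cases rest)
    case Nil
    then show ?thesis
      using assms(2) g_split k syl_replicate_append[of "[]" l k'] by simp
  next
    case (Cons y r)
    have "y \<noteq> l"
      using hd_dropWhile[of "\<lambda>x. x = l" g] Cons unfolding rest_def by auto
    moreover have "reduced (replicate k' l @ [l, y] @ r)"
      using assms(1) g_split k Cons by (simp add: replicate_append_same[symmetric])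
    then have "y \<noteq> inv_letter l"
      unfolding reduced_def by (simp add: successively_append_iff)
    ultimately have "fst y \<noteq> fst l"
      by (cases y; cases l) (auto simp: inv_letter_def)
    then show ?thesis
      using g_split Cons k by (intro that[of k l]) (auto simp: leading_run_def)
  qed
qed

lemma lsgn_cases: "lsgn l = 1 \<or> lsgn l = -1"
  by (simp add: lsgn_def)

lemma letter_power_inj:
  assumes "fst l = fst l'" "int k * lsgn l = int k' * lsgn l'" "1 \<le> k"
  shows "l = l' \<and> k = k'"
  using assms lsgn_cases[of l] lsgn_cases[of l']
  by (cases l; cases l') (auto simp: lsgn_def split: if_splits)

lemma leading_run_iff_syl:
  assumes "reduced g" "1 \<le> k"
  shows "leading_run l k g \<longleftrightarrow> 2 \<le> length (syl g) \<and> hd (syl g) = (fst l, int k * lsgn l)"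
proof
  assume "leading_run l k g"
  then show "2 \<le> length (syl g) \<and> hd (syl g) = (fst l, int k * lsgn l)"
    using leading_run_syl[OF _ assms(2)] by fastforce
next
  assume syl_g: "2 \<le> length (syl g) \<and> hd (syl g) = (fst l, int k * lsgn l)"
  obtain l' k' where "1 \<le> k'" "leading_run l' k' g"
    using exists_leading_run[OF assms(1)] syl_g by blast
  moreover from this have "hd (syl g) = (fst l', int k' * lsgn l')"
    using leading_run_syl by fastforce
  ultimately show "leading_run l k g"
    using syl_g letter_power_inj[of l' l k' k] by auto
qed

lemma hd_syl_nonzero:
  assumes "reduced g" "2 \<le> length (syl g)"
  shows "snd (hd (syl g)) \<noteq> 0"
proof -
  obtain l k where "1 \<le> k" "leading_run l k g"
    using exists_leading_run[OF assms] .
  then show ?thesis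
    using leading_run_iff_syl[OF assms(1)] lsgn_cases[of l] by fastforce
qed

text \<open>Prepending \<open>z\<close> to \<open>g\<close> turns the first syllable of \<open>g\<close> into an inner syllable.\<close>

definition exposes :: "letter \<Rightarrow> letter list \<Rightarrow> bool" where
  "exposes z g \<longleftrightarrow> 2 \<le> length (syl g) \<and> fst (hd (syl g)) \<noteq> fst z"

lemma Crun_Cons_exposes:
  assumes "reduced g" "1 \<le> k" "H \<noteq> G"
  shows "Crun H G k (z # g) = Crun H G k g +
    (if exposes z g \<and> fst (hd (syl g)) = G
     then of_bool (snd (hd (syl g)) = int k) - of_bool (snd (hd (syl g)) = - int k) else 0)"
proof -
  have "fst z = H \<longleftrightarrow> fst z \<noteq> G"
    using assms(3) by (cases "fst z"; cases H; cases G) auto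
  moreover have "int k \<noteq> - int k"
    using assms(2) by simp
  ultimately show ?thesis
    unfolding Crun_Cons[OF assms(3)] leading_run_iff_syl[OF assms(1,2)] exposes_def
    by (cases "hd (syl g)") (auto simp: lsgn_def)
qed


definition counting_series :: "(int \<Rightarrow> real) \<Rightarrow> (int \<Rightarrow> real) \<Rightarrow> letter list \<Rightarrow> real" where
  "counting_series fA fB g = (\<Sum>j. sterm fA fB (Suc j) g)"

lemma sterm_eq_Crun:
  "sterm fA fB k g = fA (int k) * Crun GB GA k g + fB (int k) * Crun GA GB k g"
  by (simp add: sterm_def Cak_eq_Crun Cbk_eq_Crun)

lemma sums_sterm: "(\<lambda>j. sterm fA fB (Suc j) g) sums (\<Sum>j<length g. sterm fA fB (Suc j) g)"
  by (rule sums_finite) (auto simp: sterm_eq_Crun Crun_short)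

lemma summable_sterm: "summable (\<lambda>j. sterm fA fB (Suc j) g)"
  using sums_sterm sums_summable by blast

lemma counting_series_Nil [simp]: "counting_series fA fB [] = 0"
  by (simp add: counting_series_def sterm_eq_Crun)

lemma sums_alternating_indicator:
  fixes f :: "int \<Rightarrow> real"
  assumes "\<And>k. f (- k) = - f k" "e \<noteq> 0"
  shows "(\<lambda>j. f (int (Suc j)) * (of_bool (e = int (Suc j)) - of_bool (e = - int (Suc j)))) sums f e"
proof -
  have "f (int (Suc j)) * (of_bool (e = int (Suc j)) - of_bool (e = - int (Suc j)))
      = (if j = nat \<bar>e\<bar> - 1 then f e else 0)" for j
  proof (cases "e > 0")
    case True
    then show ?thesis
      by (auto simp: nat_diff_distrib')
  next
    case False
    then have "e < 0"
      using assms(2) by simp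
    then show ?thesis
      using assms(1)[of "int (Suc j)"] by (auto simp: nat_diff_distrib')
  qed
  then show ?thesis
    using sums_single[of "nat \<bar>e\<bar> - 1" "\<lambda>_. f e"] by simp
qed

lemma counting_series_Cons:
  assumes "\<And>k. fA (- k) = - fA k" "\<And>k. fB (- k) = - fB k" "reduced g"
  shows "counting_series fA fB (z # g) = counting_series fA fB g
           + (if exposes z g then syllable_value fA fB (hd (syl g)) else 0)"
proof -
  obtain G e where hd_syl: "hd (syl g) = (G, e)"
    by fastforce
  have "sterm fA fB (Suc j) (z # g) - sterm fA fB (Suc j) g
      = (if exposes z g then (if G = GA then fA (int (Suc j)) else fB (int (Suc j)))
           * (of_bool (e = int (Suc j)) - of_bool (e = - int (Suc j))) else 0)" for j
    using hd_syl by (cases G) (simp_all add: sterm_eq_Crun Crun_Cons_exposes[OF assms(3)] ring_distribs)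
  moreover have "e \<noteq> 0" if "exposes z g"
    using hd_syl_nonzero[OF assms(3)] that hd_syl by (auto simp: exposes_def)
  ultimately have "(\<lambda>j. sterm fA fB (Suc j) (z # g) - sterm fA fB (Suc j) g)
      sums (if exposes z g then syllable_value fA fB (hd (syl g)) else 0)"
    using sums_alternating_indicator[of fA, OF assms(1)] sums_alternating_indicator[of fB, OF assms(2)] hd_syl
    by (auto simp: syllable_value_def)
  moreover have "(\<lambda>j. sterm fA fB (Suc j) (z # g) - sterm fA fB (Suc j) g)
      sums (counting_series fA fB (z # g) - counting_series fA fB g)"
    unfolding counting_series_def by (intro sums_diff summable_sums summable_sterm)
  ultimately show ?thesis
    using sums_unique2 by fastforce
qed

definition inner_syllables :: "letter list \<Rightarrow> (gen \<times> int) list" where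
  "inner_syllables g = butlast (tl (syl g))"

lemma inner_syllables_Cons:
  "inner_syllables (z # g) = (if exposes z g then hd (syl g) # inner_syllables g else inner_syllables g)"
  by (cases "syl g" rule: remdups_adj.cases) (auto simp: inner_syllables_def exposes_def syl_Cons)

lemma counting_series_eq_inner_syllables:
  assumes "\<And>k. fA (- k) = - fA k" "\<And>k. fB (- k) = - fB k" "reduced g"
  shows "counting_series fA fB g = sum_list (map (syllable_value fA fB) (inner_syllables g))"
  using assms(3)
proof (induction g)
  case (Cons z g)
  then show ?case
    using counting_series_Cons[of fA fB, OF assms(1,2)] reduced_ConsD by (auto simp: inner_syllables_Cons)
qed (simp add: inner_syllables_def)

lemma abs_sum_list_minus_inner_le:
  fixes f :: "'a \<Rightarrow> real"
  assumes "\<And>x. \<bar>f x\<bar> \<le> M"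
  shows "\<bar>sum_list (map f s) - sum_list (map f (butlast (tl s)))\<bar> \<le> 2 * M"
proof (cases s)
  case Nil
  then show ?thesis
    using assms[of undefined] by simp
next
  case (Cons x t)
  show ?thesis
  proof (cases t rule: rev_cases)
    case Nil
    then show ?thesis
      using Cons assms[of x] by simp
  next
    case (snoc u y)
    then show ?thesis
      using Cons assms[of x] assms[of y] by simp
  qed
qed

locale bounded_factors =
  fixes fA fB :: "int \<Rightarrow> real" and M :: real
  assumes alternating_A: "\<And>k. fA (- k) = - fA k"
    and alternating_B: "\<And>k. fB (- k) = - fB k"
    and bound_A: "\<And>k. \<bar>fA k\<bar> \<le> M"
    and bound_B: "\<And>k. \<bar>fB k\<bar> \<le> M"
begin

lemma bound_nonneg: "0 \<le> M"
  using bound_A[of 0] by simp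

sublocale quasimorphic_factors fA fB "3 * M"
proof
  show "\<bar>fA (m + n) - fA m - fA n\<bar> \<le> 3 * M" for m n
    using bound_A[of "m + n"] bound_A[of m] bound_A[of n] by (simp add: abs_le_iff)
  show "\<bar>fB (m + n) - fB m - fB n\<bar> \<le> 3 * M" for m n
    using bound_B[of "m + n"] bound_B[of m] bound_B[of n] by (simp add: abs_le_iff)
qed (simp_all add: alternating_A alternating_B)

lemma split_qm_counting_series_dist:
  assumes "reduced g"
  shows "\<bar>split_qm fA fB g - counting_series fA fB g\<bar> \<le> 2 * M"
proof -
  have "\<bar>syllable_value fA fB a\<bar> \<le> M" for a
    by (simp add: syllable_value_def bound_A bound_B)
  then show ?thesis
    using counting_series_eq_inner_syllables[of fA fB, OF alternating_A alternating_B assms]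
      abs_sum_list_minus_inner_le[of "syllable_value fA fB" M "syl g"]
    by (simp add: inner_syllables_def split_qm_eq_sum_syllable_value)
qed

lemma counting_series_fmult_defect:
  assumes "reduced g" "reduced h"
  shows "\<bar>counting_series fA fB (fmult g h) - counting_series fA fB g - counting_series fA fB h\<bar>
           \<le> 15 * M"
  using split_qm_fmult_defect[OF assms] split_qm_counting_series_dist[OF reduced_fmult[of g h]]
    split_qm_counting_series_dist[OF assms(1)] split_qm_counting_series_dist[OF assms(2)]
  by (simp add: abs_le_iff)

lemma quasimorphism_counting_series: "quasimorphism (counting_series fA fB)"
  unfolding quasimorphism_def using counting_series_fmult_defect by blast

end

lemma quasimorphic_sequence_multiple:
  fixes a :: "nat \<Rightarrow> real"
  assumes defect: "\<And>m n. \<bar>a (m + n) - a m - a n\<bar> \<le> D" and "1 \<le> n" "1 \<le> m"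
  shows "\<bar>a (n * m) / real (n * m) - a m / real m\<bar> \<le> 2 * D / real m"
proof -
  have multiple: "\<bar>a (k * m) - real k * a m\<bar> \<le> (real k + 1) * D" for k
  proof (induction k)
    case 0
    then show ?case
      using defect[of 0 0] by simp
  next
    case (Suc k)
    then show ?case
      using defect[of m "k * m"] by (simp add: algebra_simps abs_le_iff)
  qed
  have "\<bar>a (n * m) / real (n * m) - a m / real m\<bar> = \<bar>a (n * m) - real n * a m\<bar> / (real n * real m)"
    using assms(2,3) by (simp add: field_simps)
  also have "\<dots> \<le> (real n + 1) * D / (real n * real m)"
    using multiple[of n] by (intro divide_right_mono) auto
  also have "\<dots> \<le> (2 * real n) * D / (real n * real m)"
    using assms(2) defect[of 0 0] by (intro divide_right_mono mult_right_mono) auto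
  also have "\<dots> = 2 * D / real m"
    using assms(2) by simp
  finally show ?thesis .
qed

text \<open>Comparing both quotients with the one at \<open>n m\<close> gives \<open>|a n / n - a m / m| \<le> 2D/m + 2D/n\<close>.\<close>

lemma quasimorphic_sequence_convergent:
  fixes a :: "nat \<Rightarrow> real"
  assumes defect: "\<And>m n. \<bar>a (m + n) - a m - a n\<bar> \<le> D"
  shows "convergent (\<lambda>n. a n / real n)"
proof -
  have D_nonneg: "0 \<le> D"
    using defect[of 0 0] by simp
  have "Cauchy (\<lambda>n. a n / real n)"
  proof (rule CauchyI)
    fix e :: real
    assume e: "0 < e"
    obtain N :: nat where N: "4 * D / e < real N"
      using reals_Archimedean2 by blast
    have "norm (a m / real m - a n / real n) < e" if "Suc N \<le> m" "Suc N \<le> n" for m n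
    proof -
      have "2 * D / real n \<le> 2 * D / real (Suc N)" "2 * D / real m \<le> 2 * D / real (Suc N)"
        using that D_nonneg by (auto intro!: divide_left_mono)
      moreover have "4 * D / real (Suc N) < e"
        using N e by (simp add: field_simps)
      ultimately show ?thesis
        using quasimorphic_sequence_multiple[OF defect, of m n] quasimorphic_sequence_multiple[OF defect, of n m] that
        by (simp add: mult.commute abs_le_iff abs_less_iff) linarith
    qed
    then show "\<exists>M. \<forall>m\<ge>M. \<forall>n\<ge>M. norm (a m / real m - a n / real n) < e"
      by blast
  qed
  then show ?thesis
    by (simp add: Cauchy_convergent_iff)
qed

lemma quasimorphism_homog_convergent:
  assumes "quasimorphism F" "reduced g"
  shows "convergent (\<lambda>n. F (fpow g n) / real n)"
proof -
  obtain D where "\<And>g h. reduced g \<Longrightarrow> reduced h \<Longrightarrow> \<bar>F (fmult g h) - F g - F h\<bar> \<le> D"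
    using assms(1) unfolding quasimorphism_def by blast
  then show ?thesis
    by (intro quasimorphic_sequence_convergent[of _ D]) (simp add: fpow_add reduced_fpow)
qed

definition signed_indicator :: "nat \<Rightarrow> int \<Rightarrow> real" where
  "signed_indicator k e = (if e = int k then 1 else if e = - int k then -1 else 0)"

lemma bounded_factors_signed_indicator:
  assumes "1 \<le> k"
  shows "bounded_factors (signed_indicator k) (\<lambda>_. 0) 1"
    and "bounded_factors (\<lambda>_. 0) (signed_indicator k) 1"
  using assms by (unfold_locales; auto simp: signed_indicator_def)+

lemma counting_series_signed_indicator:
  assumes "1 \<le> k"
  shows "counting_series (signed_indicator k) (\<lambda>_. 0) = Cak k"
    and "counting_series (\<lambda>_. 0) (signed_indicator k) = Cbk k"
proof -
  have "sterm (signed_indicator k) (\<lambda>_. 0) (Suc j) g = (if j = k - 1 then Cak k g else 0)"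
    and "sterm (\<lambda>_. 0) (signed_indicator k) (Suc j) g = (if j = k - 1 then Cbk k g else 0)" for j g
    using assms by (auto simp: sterm_def signed_indicator_def)
  then have "(\<lambda>j. sterm (signed_indicator k) (\<lambda>_. 0) (Suc j) g) sums Cak k g"
    and "(\<lambda>j. sterm (\<lambda>_. 0) (signed_indicator k) (Suc j) g) sums Cbk k g" for g
    using sums_single[of "k - 1" "\<lambda>_. Cak k g"] sums_single[of "k - 1" "\<lambda>_. Cbk k g"] by simp_all
  then show "counting_series (signed_indicator k) (\<lambda>_. 0) = Cak k"
    and "counting_series (\<lambda>_. 0) (signed_indicator k) = Cbk k"
    unfolding counting_series_def by (simp_all add: fun_eq_iff sums_unique[symmetric])
qed

lemma Cak_homog_convergent: "reduced g \<Longrightarrow> convergent (\<lambda>n. Cak k (fpow g n) / real n)"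
proof (cases "k = 0")
  case True
  then show "convergent (\<lambda>n. Cak k (fpow g n) / real n)"
    by (simp add: Cak_eq_Crun Crun_def Ccount_def apow_def finv_def inv_letter_def convergent_const)
next
  case False
  then interpret bounded_factors "signed_indicator k" "\<lambda>_. 0" 1
    using bounded_factors_signed_indicator by simp
  show "reduced g \<Longrightarrow> ?thesis"
    using quasimorphism_homog_convergent[OF quasimorphism_counting_series]
      counting_series_signed_indicator False by simp
qed

lemma Cbk_homog_convergent: "reduced g \<Longrightarrow> convergent (\<lambda>n. Cbk k (fpow g n) / real n)"
proof (cases "k = 0")
  case True
  then show "convergent (\<lambda>n. Cbk k (fpow g n) / real n)"
    by (simp add: Cbk_eq_Crun Crun_def Ccount_def finv_def inv_letter_def convergent_const)
next
  case False
  then interpret bounded_factors "\<lambda>_. 0" "signed_indicator k" 1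
    using bounded_factors_signed_indicator by simp
  show "reduced g \<Longrightarrow> ?thesis"
    using quasimorphism_homog_convergent[OF quasimorphism_counting_series]
      counting_series_signed_indicator False by simp
qed


lemma abs_suminf_minus_partial_le:
  fixes f :: "nat \<Rightarrow> real"
  assumes "summable f" and tail: "\<And>N. (\<Sum>j\<in>{K..<N}. \<bar>f j\<bar>) \<le> C"
  shows "\<bar>suminf f - (\<Sum>j<K. f j)\<bar> \<le> C"
proof -
  have partial: "(\<Sum>n<N. \<bar>f (n + K)\<bar>) \<le> C" for N
    using tail[of "N + K"] sum.shift_bounds_nat_ivl[of "\<lambda>j. \<bar>f j\<bar>" 0 K N]
    by (simp add: atLeast0LessThan)
  then have summable_tail: "summable (\<lambda>n. \<bar>f (n + K)\<bar>)"
    by (intro summableI_nonneg_bounded[of _ C]) auto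
  have "\<bar>suminf f - (\<Sum>j<K. f j)\<bar> = \<bar>\<Sum>n. f (n + K)\<bar>"
    using suminf_minus_initial_segment[OF assms(1), of K] by simp
  also have "\<dots> \<le> (\<Sum>n. \<bar>f (n + K)\<bar>)"
    using summable_norm[of "\<lambda>n. f (n + K)"] summable_tail by simp
  also have "\<dots> \<le> C"
    by (rule suminf_le_const[OF summable_tail partial])
  finally show ?thesis .
qed

lemma tendsto_suminf_uniform_tail:
  fixes u :: "nat \<Rightarrow> nat \<Rightarrow> real" and v :: "nat \<Rightarrow> real"
  assumes summable: "\<And>n. summable (u n)"
    and lim: "\<And>j. (\<lambda>n. u n j) \<longlonglongrightarrow> v j"
    and tail: "\<And>n K N. (\<Sum>j\<in>{K..<N}. \<bar>u n j\<bar>) \<le> B / real (Suc K)"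
  shows "summable v" "(\<lambda>n. suminf (u n)) \<longlonglongrightarrow> suminf v"
proof -
  have tail_v: "(\<Sum>j\<in>{K..<N}. \<bar>v j\<bar>) \<le> B / real (Suc K)" for K N
    by (rule LIMSEQ_le_const2[OF tendsto_sum[OF tendsto_rabs[OF lim]]]) (use tail in blast)
  have "summable (\<lambda>j. \<bar>v j\<bar>)"
    by (rule summableI_nonneg_bounded[of _ B]) (use tail_v[of 0] in \<open>auto simp: atLeast0LessThan\<close>)
  then show summable_v: "summable v"
    by (simp add: summable_norm_cancel)
  show "(\<lambda>n. suminf (u n)) \<longlonglongrightarrow> suminf v"
  proof (rule LIMSEQ_I)
    fix r :: real
    assume r: "0 < r"
    obtain K :: nat where "3 * B / r < real K"
      using reals_Archimedean2 by blast
    then have BK: "B / real (Suc K) < r / 3"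
      using r by (simp add: field_simps)
    have "(\<lambda>n. \<Sum>j<K. u n j) \<longlonglongrightarrow> (\<Sum>j<K. v j)"
      by (intro tendsto_sum lim)
    then obtain n0 where n0: "\<And>n. n \<ge> n0 \<Longrightarrow> norm ((\<Sum>j<K. u n j) - (\<Sum>j<K. v j)) < r / 3"
      using LIMSEQ_D[of _ _ "r / 3"] r by (metis divide_pos_pos zero_less_numeral)
    have "norm (suminf (u n) - suminf v) < r" if "n \<ge> n0" for n
      using abs_suminf_minus_partial_le[OF summable[of n] tail[of n K]]
        abs_suminf_minus_partial_le[OF summable_v tail_v[of K]]
        n0[OF that] BK
      unfolding real_norm_def by linarith
    then show "\<exists>n0. \<forall>n\<ge>n0. norm (suminf (u n) - suminf v) < r"
      by blast
  qed
qed

definition Cweight :: "letter list \<Rightarrow> nat \<Rightarrow> real" where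
  "Cweight h j = \<bar>Cak (Suc j) h\<bar> + \<bar>Cbk (Suc j) h\<bar>"

definition first_syllable_length :: "letter list \<Rightarrow> real" where
  "first_syllable_length h = (case syl h of [] \<Rightarrow> 0 | a # _ \<Rightarrow> real_of_int \<bar>snd a\<bar>)"

lemma Cweight_Cons_le:
  assumes "reduced g"
  shows "Cweight (z # g) j \<le> Cweight g j + of_bool (exposes z g \<and> Suc j = nat \<bar>snd (hd (syl g))\<bar>)"
proof -
  obtain G e where hd_syl: "hd (syl g) = (G, e)"
    by fastforce
  have "\<bar>Crun GB GA (Suc j) (z # g) - Crun GB GA (Suc j) g\<bar>
      + \<bar>Crun GA GB (Suc j) (z # g) - Crun GA GB (Suc j) g\<bar>
      \<le> of_bool (exposes z g \<and> Suc j = nat \<bar>snd (hd (syl g))\<bar>)"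
    using hd_syl by (cases G) (auto simp: Crun_Cons_exposes[OF assms])
  then show ?thesis
    unfolding Cweight_def Cak_eq_Crun Cbk_eq_Crun
    using abs_triangle_ineq2[of "Crun GB GA (Suc j) (z # g)" "Crun GB GA (Suc j) g"]
      abs_triangle_ineq2[of "Crun GA GB (Suc j) (z # g)" "Crun GA GB (Suc j) g"]
    by linarith
qed

lemma first_syllable_length_Cons_le:
  "first_syllable_length (z # g) \<le> (if exposes z g then 1 else first_syllable_length g + 1)"
  by (cases "syl g"; cases "hd (syl g)") (auto simp: first_syllable_length_def syl_Cons lsgn_def exposes_def)

lemma first_syllable_length_exposes:
  "exposes z g \<Longrightarrow> first_syllable_length g = real (nat \<bar>snd (hd (syl g))\<bar>)"
  by (cases "syl g") (auto simp: first_syllable_length_def exposes_def)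

lemma sum_weighted_indicator_le:
  "(\<Sum>j<K. real (Suc j) * of_bool (P \<and> Suc j = n)) \<le> (if P then real n else 0)"
proof -
  have "(\<Sum>j<K. real (Suc j) * of_bool (P \<and> Suc j = n))
      = (\<Sum>j<K. if j = n - 1 then (if P \<and> 1 \<le> n then real n else 0) else 0)"
    by (intro sum.cong) auto
  then show ?thesis
    by simp
qed

text \<open>Amortization: a run of length \<open>k\<close> counted by \<open>Cak k\<close> or \<open>Cbk k\<close> uses \<open>k\<close> letters of the word.\<close>

lemma weighted_Cweight_le_length:
  "reduced h \<Longrightarrow> (\<Sum>j<K. real (Suc j) * Cweight h j) + first_syllable_length h \<le> real (length h)"
proof (induction h)
  case Nil
  then show ?case
    by (simp add: Cweight_def Cak_eq_Crun Cbk_eq_Crun first_syllable_length_def)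
next
  case (Cons z g)
  have g: "reduced g"
    using Cons.prems reduced_ConsD by blast
  define k where "k = nat \<bar>snd (hd (syl g))\<bar>"
  have "(\<Sum>j<K. real (Suc j) * Cweight (z # g) j)
      \<le> (\<Sum>j<K. real (Suc j) * Cweight g j + real (Suc j) * of_bool (exposes z g \<and> Suc j = k))"
    using Cweight_Cons_le[OF g] by (intro sum_mono) (simp add: k_def flip: distrib_left)
  also have "\<dots> \<le> (\<Sum>j<K. real (Suc j) * Cweight g j) + (if exposes z g then real k else 0)"
    using sum_weighted_indicator_le[where K = K and P = "exposes z g" and n = k] by (simp add: sum.distrib)
  finally show ?case
    using first_syllable_length_Cons_le[of z g] first_syllable_length_exposes[of z g] Cons.IH[OF g]
    by (cases "exposes z g") (simp_all add: k_def)
qed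

lemma Cweight_tail_le:
  assumes "reduced h"
  shows "(\<Sum>j\<in>{K..<N}. Cweight h j) \<le> real (length h) / real (Suc K)"
proof -
  have nonneg: "0 \<le> Cweight h j" for j
    by (simp add: Cweight_def)
  have "real (Suc K) * (\<Sum>j\<in>{K..<N}. Cweight h j) \<le> (\<Sum>j\<in>{K..<N}. real (Suc j) * Cweight h j)"
    unfolding sum_distrib_left by (intro sum_mono mult_right_mono nonneg) auto
  also have "\<dots> \<le> (\<Sum>j<N. real (Suc j) * Cweight h j)"
    using nonneg by (intro sum_mono2) auto
  also have "\<dots> \<le> real (length h)"
    using weighted_Cweight_le_length[OF assms, of N]
    by (cases "syl h") (auto simp: first_syllable_length_def)
  finally show ?thesis
    by (simp add: field_simps)
qed


lemma homog_tendsto_bounded_dist: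
  assumes "\<And>h. reduced h \<Longrightarrow> \<bar>F h - F' h\<bar> \<le> C"
    and "(\<lambda>n. F' (fpow g n) / real n) \<longlonglongrightarrow> L"
  shows "(\<lambda>n. F (fpow g n) / real n) \<longlonglongrightarrow> L"
proof -
  have "norm ((F (fpow g n) - F' (fpow g n)) / real n) \<le> C / real n" for n
    using assms(1)[OF reduced_fpow] by (simp add: abs_divide divide_right_mono)
  then have "(\<lambda>n. (F (fpow g n) - F' (fpow g n)) / real n) \<longlonglongrightarrow> 0"
    by (intro tendsto_0_le[OF lim_const_over_n[of "1 :: real"], where K = C] always_eventually allI) simp
  from tendsto_add[OF assms(2) this] show ?thesis
    by (simp add: diff_divide_distrib)
qed

context bounded_factors
begin

lemma abs_sterm_le: "\<bar>sterm fA fB (Suc j) h\<bar> \<le> M * Cweight h j"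
proof -
  have "\<bar>sterm fA fB (Suc j) h\<bar> \<le> \<bar>fA (int (Suc j))\<bar> * \<bar>Cak (Suc j) h\<bar> + \<bar>fB (int (Suc j))\<bar> * \<bar>Cbk (Suc j) h\<bar>"
    unfolding sterm_def abs_mult[symmetric] by (rule abs_triangle_ineq)
  also have "\<dots> \<le> M * \<bar>Cak (Suc j) h\<bar> + M * \<bar>Cbk (Suc j) h\<bar>"
    by (intro add_mono mult_right_mono bound_A bound_B) auto
  finally show ?thesis
    by (simp add: Cweight_def distrib_left)
qed

lemma sterm_fpow_tail_le:
  "(\<Sum>j\<in>{K..<N}. \<bar>sterm fA fB (Suc j) (fpow g n) / real n\<bar>) \<le> M * real (length g) / real (Suc K)"
proof (cases "n = 0")
  case False
  have "(\<Sum>j\<in>{K..<N}. \<bar>sterm fA fB (Suc j) (fpow g n) / real n\<bar>)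
      \<le> M * (\<Sum>j\<in>{K..<N}. Cweight (fpow g n) j) / real n"
    unfolding sum_distrib_left sum_divide_distrib by (intro sum_mono) (simp add: abs_sterm_le divide_right_mono)
  also have "\<dots> \<le> M * (real (length (fpow g n)) / real (Suc K)) / real n"
    by (intro divide_right_mono mult_left_mono Cweight_tail_le reduced_fpow bound_nonneg) auto
  also have "\<dots> \<le> M * (real (n * length g) / real (Suc K)) / real n"
    using length_fpow[of g n] bound_nonneg
    by (intro divide_right_mono mult_left_mono) (simp_all flip: of_nat_mult)
  also have "\<dots> = M * real (length g) / real (Suc K)"
    using False by simp
  finally show ?thesis .
qed (simp add: bound_nonneg)

lemma sterm_homog_tendsto:
  assumes "reduced g"
  shows "(\<lambda>n. sterm fA fB (Suc j) (fpow g n) / real n) \<longlonglongrightarrow> hterm fA fB (Suc j) g"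
proof -
  have "(\<lambda>n. fA (int (Suc j)) * (Cak (Suc j) (fpow g n) / real n)
          + fB (int (Suc j)) * (Cbk (Suc j) (fpow g n) / real n)) \<longlonglongrightarrow> hterm fA fB (Suc j) g"
    unfolding hterm_def homog_def
    using Cak_homog_convergent[OF assms] Cbk_homog_convergent[OF assms]
    by (intro tendsto_intros) (simp_all add: convergent_LIMSEQ_iff)
  then show ?thesis
    by (simp add: sterm_def add_divide_distrib)
qed

lemma homog_counting_series:
  assumes "reduced g"
  shows "summable (\<lambda>j. hterm fA fB (Suc j) g)"
    and "(\<lambda>n. counting_series fA fB (fpow g n) / real n) \<longlonglongrightarrow> (\<Sum>j. hterm fA fB (Suc j) g)"
proof -
  define u where "u n j = sterm fA fB (Suc j) (fpow g n) / real n" for n j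
  have "summable (u n)" for n
    unfolding u_def by (intro summable_divide summable_sterm)
  moreover have "(\<lambda>n. u n j) \<longlonglongrightarrow> hterm fA fB (Suc j) g" for j
    unfolding u_def by (rule sterm_homog_tendsto[OF assms])
  moreover have "(\<Sum>j\<in>{K..<N}. \<bar>u n j\<bar>) \<le> M * real (length g) / real (Suc K)" for n K N
    unfolding u_def by (rule sterm_fpow_tail_le)
  ultimately have "summable (\<lambda>j. hterm fA fB (Suc j) g)"
    and exchange: "(\<lambda>n. suminf (u n)) \<longlonglongrightarrow> (\<Sum>j. hterm fA fB (Suc j) g)"
    by (rule tendsto_suminf_uniform_tail)+
  then show "summable (\<lambda>j. hterm fA fB (Suc j) g)"
    by blast
  have "suminf (u n) = counting_series fA fB (fpow g n) / real n" for n
    unfolding u_def counting_series_def by (rule suminf_divide[OF summable_sterm])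
  then show "(\<lambda>n. counting_series fA fB (fpow g n) / real n) \<longlonglongrightarrow> (\<Sum>j. hterm fA fB (Suc j) g)"
    using exchange by simp
qed

end


definition counting_combination :: "(letter list \<Rightarrow> real) \<Rightarrow> bool" where
  "counting_combination F \<longleftrightarrow> (\<exists>W c. finite W \<and> (\<forall>w\<in>W. reduced w \<and> w \<noteq> []) \<and>
     (\<forall>g. F g = (\<Sum>w\<in>W. c w * Ccount w g)))"

lemma counting_combination_zero: "counting_combination (\<lambda>_. 0)"
  unfolding counting_combination_def by (intro exI[of _ "{}"]) simp

lemma counting_combination_Ccount:
  "reduced w \<Longrightarrow> w \<noteq> [] \<Longrightarrow> counting_combination (Ccount w)"
  unfolding counting_combination_def by (intro exI[of _ "{w}"] exI[of _ "\<lambda>_. 1"]) simp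

lemma counting_combination_scale:
  assumes "counting_combination F"
  shows "counting_combination (\<lambda>g. a * F g)"
proof -
  obtain W c where "finite W" "\<forall>w\<in>W. reduced w \<and> w \<noteq> []" "\<And>g. F g = (\<Sum>w\<in>W. c w * Ccount w g)"
    using assms unfolding counting_combination_def by blast
  then show ?thesis
    unfolding counting_combination_def
    by (intro exI[of _ W] exI[of _ "\<lambda>w. a * c w"]) (simp add: sum_distrib_left mult.assoc)
qed

lemma counting_combination_add:
  assumes "counting_combination F" "counting_combination F'"
  shows "counting_combination (\<lambda>g. F g + F' g)"
proof -
  obtain W c where W: "finite W" "\<forall>w\<in>W. reduced w \<and> w \<noteq> []" "\<And>g. F g = (\<Sum>w\<in>W. c w * Ccount w g)"
    using assms(1) unfolding counting_combination_def by blast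
  obtain W' c' where W': "finite W'" "\<forall>w\<in>W'. reduced w \<and> w \<noteq> []"
    "\<And>g. F' g = (\<Sum>w\<in>W'. c' w * Ccount w g)"
    using assms(2) unfolding counting_combination_def by blast
  define d where "d w = (if w \<in> W then c w else 0) + (if w \<in> W' then c' w else 0)" for w
  have "(\<Sum>w\<in>W \<union> W'. d w * Ccount w g) = F g + F' g" for g
  proof -
    have "(\<Sum>w\<in>W \<union> W'. (if w \<in> W then c w else 0) * Ccount w g) = F g"
      unfolding W(3) using W(1) W'(1) by (intro sum.mono_neutral_cong_right) auto
    moreover have "(\<Sum>w\<in>W \<union> W'. (if w \<in> W' then c' w else 0) * Ccount w g) = F' g"
      unfolding W'(3) using W(1) W'(1) by (intro sum.mono_neutral_cong_right) auto
    ultimately show ?thesis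
      by (simp add: d_def distrib_right sum.distrib)
  qed
  then show ?thesis
    unfolding counting_combination_def using W W' by (intro exI[of _ "W \<union> W'"] exI[of _ d]) auto
qed

lemma counting_combination_sum:
  "finite I \<Longrightarrow> (\<And>i. i \<in> I \<Longrightarrow> counting_combination (F i))
    \<Longrightarrow> counting_combination (\<lambda>g. \<Sum>i\<in>I. F i g)"
  by (induction I rule: finite_induct) (auto intro: counting_combination_zero counting_combination_add)

lemma reduced_flanked_run:
  assumes "fst x \<noteq> fst l" "fst y \<noteq> fst l" "1 \<le> k"
  shows "reduced (x # replicate k l @ [y])"
proof -
  have "reduced (replicate k l @ [y])"
  proof (induction k)
    case (Suc k)
    then show ?case
      using assms(2) by (cases k) (auto simp: inv_letter_def prod_eq_iff)
  qed simp
  then show ?thesis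
    using assms(1,3) by (cases k) (auto simp: inv_letter_def prod_eq_iff)
qed

lemma counting_combination_Crun:
  assumes "H \<noteq> G" "1 \<le> k"
  shows "counting_combination (Crun H G k)"
proof -
  have "counting_combination (Ccount (x # replicate k (G, False) @ [y]))"
    if "fst x = H" "fst y = H" for x y
    using that assms reduced_flanked_run[of x "(G, False)" y k] by (intro counting_combination_Ccount) auto
  then show ?thesis
    unfolding Crun_def by (intro counting_combination_add) auto
qed

lemma counting_series_finite_support:
  assumes "finite {k. fA k \<noteq> 0}" "finite {k. fB k \<noteq> 0}"
  shows "counting_combination (counting_series fA fB)"
proof -
  define S where "S = insert 0 ({k. fA k \<noteq> 0} \<union> {k. fB k \<noteq> 0})"
  define K where "K = nat (Max S)"
  have "finite S" "0 \<in> S"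
    using assms by (simp_all add: S_def)
  then have bound: "k \<in> S \<Longrightarrow> k \<le> int K" for k
    using Max_ge[of S k] Max_ge[of S 0] by (simp add: K_def)
  have vanish: "fA (int (Suc j)) = 0 \<and> fB (int (Suc j)) = 0" if "K \<le> j" for j
  proof -
    have "int (Suc j) \<notin> S"
      using bound[of "int (Suc j)"] that by linarith
    then show ?thesis
      by (simp add: S_def)
  qed
  define term_A where "term_A j g = fA (int (Suc j)) * Crun GB GA (Suc j) g" for j g
  define term_B where "term_B j g = fB (int (Suc j)) * Crun GA GB (Suc j) g" for j g
  have "counting_series fA fB = (\<lambda>g. \<Sum>j<K. term_A j g + term_B j g)"
    unfolding fun_eq_iff counting_series_def sterm_eq_Crun term_A_def term_B_def
    using vanish by (subst suminf_finite[of "{..<K}"]) auto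
  moreover have "counting_combination (term_A j)" "counting_combination (term_B j)" for j
    unfolding term_A_def term_B_def
    by (rule counting_combination_scale, rule counting_combination_Crun, simp_all)+
  then have "counting_combination (\<lambda>g. \<Sum>j<K. term_A j g + term_B j g)"
    by (intro counting_combination_sum[of "{..<K}" "\<lambda>j g. term_A j g + term_B j g"] counting_combination_add) simp_all
  ultimately show ?thesis
    by simp
qed

theorem theorem3p25:
  fixes fA fB :: "int \<Rightarrow> real"
  assumes altA: "\<forall>k. fA (- k) = - fA k"
      and altB: "\<forall>k. fB (- k) = - fB k"
      and bddA: "\<exists>M. \<forall>k. \<bar>fA k\<bar> \<le> M"
      and bddB: "\<exists>M. \<forall>k. \<bar>fB k\<bar> \<le> M"
  shows
    "(\<forall>g. reduced g \<longrightarrow> summable (\<lambda>k. sterm fA fB (Suc k) g))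
     \<and> quasimorphism (\<lambda>g. \<Sum>k. sterm fA fB (Suc k) g)
     \<and> (\<exists>D. \<forall>g. reduced g \<longrightarrow>
           \<bar>split_qm fA fB g - (\<Sum>k. sterm fA fB (Suc k) g)\<bar> \<le> D)
     \<and> (\<forall>g. reduced g \<longrightarrow>
           (\<forall>k. convergent (\<lambda>n. Cak k (fpow g n) / real n))
         \<and> (\<forall>k. convergent (\<lambda>n. Cbk k (fpow g n) / real n))
         \<and> summable (\<lambda>k. hterm fA fB (Suc k) g)
         \<and> (\<lambda>n. split_qm fA fB (fpow g n) / real n)
              \<longlonglongrightarrow> (\<Sum>k. hterm fA fB (Suc k) g))
     \<and> (finite {k. fA k \<noteq> 0} \<and> finite {k. fB k \<noteq> 0} \<longrightarrow>
          (\<exists>W c. finite W \<and> (\<forall>w\<in>W. reduced w \<and> w \<noteq> []) \<and>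
             (\<exists>D. \<forall>g. reduced g \<longrightarrow>
                \<bar>split_qm fA fB g - (\<Sum>w\<in>W. c w * Ccount w g)\<bar> \<le> D)))"
proof -
  obtain MA MB where MA: "\<And>k. \<bar>fA k\<bar> \<le> MA" and MB: "\<And>k. \<bar>fB k\<bar> \<le> MB"
    using bddA bddB by blast
  interpret bounded_factors fA fB "max MA MB"
    by unfold_locales (simp_all add: altA altB MA MB le_max_iff_disj)
  have series: "(\<lambda>g. \<Sum>k. sterm fA fB (Suc k) g) = counting_series fA fB"
    by (simp add: fun_eq_iff counting_series_def)
  have homog: "(\<forall>k. convergent (\<lambda>n. Cak k (fpow g n) / real n))
      \<and> (\<forall>k. convergent (\<lambda>n. Cbk k (fpow g n) / real n))
      \<and> summable (\<lambda>k. hterm fA fB (Suc k) g)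
      \<and> (\<lambda>n. split_qm fA fB (fpow g n) / real n) \<longlonglongrightarrow> (\<Sum>k. hterm fA fB (Suc k) g)"
    if "reduced g" for g
    using Cak_homog_convergent[OF that] Cbk_homog_convergent[OF that] homog_counting_series[OF that]
      homog_tendsto_bounded_dist[OF split_qm_counting_series_dist homog_counting_series(2)[OF that]]
    by blast
  have finite_support: "\<exists>W c. finite W \<and> (\<forall>w\<in>W. reduced w \<and> w \<noteq> []) \<and>
      (\<exists>D. \<forall>g. reduced g \<longrightarrow> \<bar>split_qm fA fB g - (\<Sum>w\<in>W. c w * Ccount w g)\<bar> \<le> D)"
    if "finite {k. fA k \<noteq> 0} \<and> finite {k. fB k \<noteq> 0}"
  proof -
    have "counting_combination (counting_series fA fB)"
      using counting_series_finite_support that by simp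
    then obtain W c where "finite W" "\<forall>w\<in>W. reduced w \<and> w \<noteq> []"
      "\<And>g. counting_series fA fB g = (\<Sum>w\<in>W. c w * Ccount w g)"
      unfolding counting_combination_def by blast
    then show ?thesis
      using split_qm_counting_series_dist by (intro exI[of _ W] exI[of _ c] exI[of _ "2 * max MA MB"]) auto
  qed
  show ?thesis
    unfolding series
    using summable_sterm quasimorphism_counting_series split_qm_counting_series_dist homog finite_support
    by (intro conjI allI impI exI[of _ "2 * max MA MB"]) (simp_all add: counting_series_def)
qed

end
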